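(* Let $\mathbb X_S\subset\mathbb X$ be a quasi-Banach space and $\mathbb X_L$ a Banach space with continuous embeddings $\mathbb X_S\subset\mathbb X_L\subset\mathbb X_A$, and let $e\in(0,1)$. For $\varrho>0$ let $K^\varrho_{\mathbb X_S}:=\{x\in\mathbb X_S:\|x\|_{\mathbb X_S}\le\varrho\}$. The following are equivalent: (i) there is a continuous embedding $(\mathbb X_A,\mathbb X_S)_{e,1}\subset\mathbb X_L$; (ii) there is $c>0$ with $\Omega(\delta,K^\varrho_{\mathbb X_S})\le c\varrho^e\delta^{1-e}$ for all $\delta,\varrho>0$.
   Context: $\mathbb X$, $\mathbb X_A$ real Banach spaces with a continuous dense embedding $\mathbb X\subset\mathbb X_A$; $\mathbb Y$ real Hilbert space; $A:\mathbb X_A\to\mathbb Y$ bounded linear with $\frac1M\|x\|_{\mathbb X_A}\le\|Ax\|_{\mathbb Y}\le M\|x\|_{\mathbb X_A}$ for all $x\in\mathbb X_A$ ($M\ge1$). Loss: $L(x_1,x_2):=\|x_1-x_2\|_{\mathbb X_L}$ if $x_1-x_2\in\mathbb X_L$ and $\infty$ otherwise. Modulus of continuity: $\Omega(\delta,K):=\sup\{L(x_1,x_2):x_1,x_2\in K,\ \|Ax_1-Ax_2\|_{\mathbb Y}\le\delta\}$. Real interpolation: $K(x,t):=\inf_{z\in\mathbb X_S}(\|x-z\|_{\mathbb X_A}+t\|z\|_{\mathbb X_S})$, and $(\mathbb X_A,\mathbb X_S)_{e,1}:=\{x\in\mathbb X_A:\int_0^\infty t^{-e}K(x,t)\frac{dt}t<\infty\}$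 with that integral as quasi-norm. *)

theory Defs
  imports "HOL-Analysis.Analysis"
begin

text \<open>Subspaces of the ambient Banach space X_A (modelled as a type 'a :: banach)
  carrying their own (quasi-)norms.\<close>

definition quasi_normed_subspace :: "'a::real_vector set \<Rightarrow> ('a \<Rightarrow> real) \<Rightarrow> bool" where
  "quasi_normed_subspace S q \<longleftrightarrow>
     subspace S \<and>
     (\<forall>x\<in>S. 0 \<le> q x) \<and>
     (\<forall>x\<in>S. q x = 0 \<longleftrightarrow> x = 0) \<and>
     (\<forall>c. \<forall>x\<in>S. q (c *\<^sub>R x) = \<bar>c\<bar> * q x) \<and>
     (\<exists>C\<ge>1. \<forall>x\<in>S. \<forall>y\<in>S. q (x + y) \<le> C * (q x + q y))"

definition normed_subspace :: "'a::real_vector set \<Rightarrow> ('a \<Rightarrow> real) \<Rightarrow> bool" where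
  "normed_subspace S n \<longleftrightarrow>
     subspace S \<and>
     (\<forall>x\<in>S. 0 \<le> n x) \<and>
     (\<forall>x\<in>S. n x = 0 \<longleftrightarrow> x = 0) \<and>
     (\<forall>c. \<forall>x\<in>S. n (c *\<^sub>R x) = \<bar>c\<bar> * n x) \<and>
     (\<forall>x\<in>S. \<forall>y\<in>S. n (x + y) \<le> n x + n y)"

definition complete_wrt :: "'a::real_vector set \<Rightarrow> ('a \<Rightarrow> real) \<Rightarrow> bool" where
  "complete_wrt S q \<longleftrightarrow>
     (\<forall>f::nat \<Rightarrow> 'a. (\<forall>k. f k \<in> S) \<and>
        (\<forall>\<epsilon>>0. \<exists>N. \<forall>m\<ge>N. \<forall>k\<ge>N. q (f m - f k) < \<epsilon>)
        \<longrightarrow> (\<exists>x\<in>S. (\<lambda>k. q (f k - x)) \<longlonglongrightarrow> 0))"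

definition quasi_banach_subspace :: "'a::real_vector set \<Rightarrow> ('a \<Rightarrow> real) \<Rightarrow> bool" where
  "quasi_banach_subspace S q \<longleftrightarrow> quasi_normed_subspace S q \<and> complete_wrt S q"

definition banach_subspace :: "'a::real_vector set \<Rightarrow> ('a \<Rightarrow> real) \<Rightarrow> bool" where
  "banach_subspace S n \<longleftrightarrow> normed_subspace S n \<and> complete_wrt S n"

definition cont_embedding :: "'a set \<Rightarrow> ('a \<Rightarrow> real) \<Rightarrow> 'a set \<Rightarrow> ('a \<Rightarrow> real) \<Rightarrow> bool" where
  "cont_embedding S p T q \<longleftrightarrow> S \<subseteq> T \<and> (\<exists>C. \<forall>x\<in>S. q x \<le> C * p x)"

definition loss :: "'a::real_vector set \<Rightarrow> ('a \<Rightarrow> real) \<Rightarrow> 'a \<Rightarrow> 'a \<Rightarrow> ereal" where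
  "loss XL nL x1 x2 = (if x1 - x2 \<in> XL then ereal (nL (x1 - x2)) else \<infinity>)"

definition modulus :: "('a::real_vector \<Rightarrow> 'b::real_normed_vector) \<Rightarrow> 'a set \<Rightarrow> ('a \<Rightarrow> real)
     \<Rightarrow> real \<Rightarrow> 'a set \<Rightarrow> ereal" where
  "modulus A XL nL \<delta> K =
     Sup {loss XL nL x1 x2 | x1 x2. x1 \<in> K \<and> x2 \<in> K \<and> norm (A x1 - A x2) \<le> \<delta>}"

definition Kfun :: "'a::real_normed_vector set \<Rightarrow> ('a \<Rightarrow> real) \<Rightarrow> 'a \<Rightarrow> real \<Rightarrow> real" where
  "Kfun XS qS x t = (INF z\<in>XS. norm (x - z) + t * qS z)"

definition interp_integral :: "'a::real_normed_vector set \<Rightarrow> ('a \<Rightarrow> real) \<Rightarrow> real \<Rightarrow> 'a \<Rightarrow> ennreal" where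
  "interp_integral XS qS e x =
     (\<integral>\<^sup>+ t. indicator {0<..} t * ennreal (t powr (- e) * Kfun XS qS x t / t) \<partial>lborel)"

definition interp_space :: "'a::real_normed_vector set \<Rightarrow> ('a \<Rightarrow> real) \<Rightarrow> real \<Rightarrow> 'a set" where
  "interp_space XS qS e = {x. interp_integral XS qS e x < \<infinity>}"

definition interp_norm :: "'a::real_normed_vector set \<Rightarrow> ('a \<Rightarrow> real) \<Rightarrow> real \<Rightarrow> 'a \<Rightarrow> real" where
  "interp_norm XS qS e x = enn2real (interp_integral XS qS e x)"

definition Sball :: "'a set \<Rightarrow> ('a \<Rightarrow> real) \<Rightarrow> real \<Rightarrow> 'a set" where
  "Sball XS qS \<rho> = {x\<in>XS. qS x \<le> \<rho>}"

end

theory Submission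
  imports Defs
begin

text \<open>
  An element \<open>u \<in> X\<^sub>S\<close> has \<open>K(u,t) \<le> min (\<parallel>u\<parallel>) (t \<parallel>u\<parallel>\<^sub>S)\<close>, so its interpolation norm is
  \<open>\<lesssim> \<parallel>u\<parallel>\<^sup>1\<^sup>-\<^sup>e \<parallel>u\<parallel>\<^sub>S\<^sup>e\<close>. Through the stability of \<open>A\<close>, either statement is therefore
  equivalent to the interpolation inequality \<open>\<parallel>u\<parallel>\<^sub>L \<lesssim> \<parallel>u\<parallel>\<^sub>S\<^sup>e \<parallel>A u\<parallel>\<^sup>1\<^sup>-\<^sup>e\<close> on \<open>X\<^sub>S\<close>:
  (i) implies it directly; it bounds the modulus because differences of points of the ball lie
  in a ball of comparable radius; and the modulus with \<open>x\<^sub>2 = 0\<close> gives it back.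
  From the inequality to (i): for \<open>x\<close> in the interpolation space choose near-minimizers \<open>z\<^sub>n\<close>
  of \<open>K(x,2\<^sup>-\<^sup>n)\<close>. They converge to \<open>x\<close>, and the inequality bounds \<open>\<parallel>z\<^sub>n\<^sub>+\<^sub>1 - z\<^sub>n\<parallel>\<^sub>L\<close> by
  \<open>2\<^sup>n\<^sup>e K(x,2\<^sup>-\<^sup>n)\<close>, a dyadic lower sum of the integral defining \<open>\<parallel>x\<parallel>\<^sub>e\<^sub>,\<^sub>1\<close>. Hence
  \<open>(z\<^sub>n)\<close> is Cauchy in \<open>X\<^sub>L\<close>, and completeness gives \<open>x \<in> X\<^sub>L\<close> with \<open>\<parallel>x\<parallel>\<^sub>L \<lesssim> \<parallel>x\<parallel>\<^sub>e\<^sub>,\<^sub>1\<close>.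
\<close>

lemma nn_integral_powr_two_pieces:
  fixes a b s e :: real
  assumes "0 \<le> a" "0 \<le> b" "0 < s" "0 < e" "e < 1"
  shows "(\<integral>\<^sup>+ t. ennreal (b * t powr (-e)) * indicator {0..s} t
              + ennreal (a * t powr (-e-1)) * indicator {s..} t \<partial>lborel)
       = ennreal (b * s powr (1-e) / (1-e) + a * s powr (-e) / e)"
proof -
  have "((\<lambda>t. b * t powr (-e)) has_integral b * (s powr (1-e) / (1-e))) {0..s}"
    using has_integral_powr_from_0[of "-e" s] assms by (intro has_integral_mult_right) auto
  then have lower: "(\<integral>\<^sup>+ t. ennreal (b * t powr (-e)) * indicator {0..s} t \<partial>lborel)
      = ennreal (b * s powr (1-e) / (1-e))"
    by (intro nn_integral_has_integral_lebesgue') (use assms in auto)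
  have "((\<lambda>t. a * t powr (-e-1)) has_integral a * (s powr (-e) / e)) {s..}"
    using has_integral_powr_to_inf[of "-e-1" s] assms by (intro has_integral_mult_right) auto
  then have upper: "(\<integral>\<^sup>+ t. ennreal (a * t powr (-e-1)) * indicator {s..} t \<partial>lborel)
      = ennreal (a * s powr (-e) / e)"
    by (intro nn_integral_has_integral_lebesgue') (use assms in auto)
  have "(\<integral>\<^sup>+ t. ennreal (b * t powr (-e)) * indicator {0..s} t
              + ennreal (a * t powr (-e-1)) * indicator {s..} t \<partial>lborel)
      = ennreal (b * s powr (1-e) / (1-e)) + ennreal (a * s powr (-e) / e)"
    unfolding lower[symmetric] upper[symmetric] by (intro nn_integral_add) measurable
  then show ?thesis
    using assms by (simp add: ennreal_plus)
qed

text \<open>Splitting at \<open>s = a / b\<close>, where the two bounds on \<open>k\<close> cross.\<close>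
lemma nn_integral_powr_le_of_le_min:
  fixes k :: "real \<Rightarrow> real" and a b e :: real
  assumes ab: "0 \<le> a" "0 \<le> b" and e: "0 < e" "e < 1"
    and k: "\<And>t. 0 < t \<Longrightarrow> k t \<le> a \<and> k t \<le> t * b"
  shows "(\<integral>\<^sup>+ t. indicator {0<..} t * ennreal (t powr (- e) * k t / t) \<partial>lborel)
     \<le> ennreal ((1/(1-e) + 1/e) * a powr (1-e) * b powr e)"
proof (cases "a = 0 \<or> b = 0")
  case True
  then have "k t \<le> 0" if "0 < t" for t
    using k[OF that] by auto
  then have "(\<lambda>t. indicator {0<..} t * ennreal (t powr (- e) * k t / t)) = (\<lambda>_. 0)"
    by (intro ext) (auto simp: indicator_def ennreal_eq_0_iff mult_nonneg_nonpos divide_nonpos_pos)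
  then show ?thesis
    by simp
next
  case False
  define s where "s = a / b"
  have s: "0 < s"
    using False ab by (simp add: s_def)
  have "indicator {0<..} t * ennreal (t powr (- e) * k t / t)
      \<le> ennreal (b * t powr (-e)) * indicator {0..s} t + ennreal (a * t powr (-e-1)) * indicator {s..} t"
    for t :: real
  proof (cases "0 < t")
    case t: True
    show ?thesis
    proof (cases "t \<le> s")
      case True
      have "t powr (- e) * k t / t \<le> t powr (-e) * (t * b) / t"
        using k[OF t] t by (intro divide_right_mono mult_left_mono) auto
      also have "\<dots> = b * t powr (-e)"
        using t by simp
      finally show ?thesis
        using True t by (simp add: ennreal_leI add_increasing2)
    next
      case False
      have "t powr (- e) * k t / t \<le> t powr (-e) * a / t"
        using k[OF t] t by (intro divide_right_mono mult_left_mono) auto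
      also have "\<dots> = a * t powr (-e-1)"
        using t by (simp add: powr_diff)
      finally show ?thesis
        using False t by (simp add: ennreal_leI add_increasing)
    qed
  qed simp
  then have "(\<integral>\<^sup>+ t. indicator {0<..} t * ennreal (t powr (- e) * k t / t) \<partial>lborel)
      \<le> ennreal (b * s powr (1-e) / (1-e) + a * s powr (-e) / e)"
    unfolding nn_integral_powr_two_pieces[OF ab s e, symmetric] by (rule nn_integral_mono)
  also have "b * s powr (1-e) / (1-e) + a * s powr (-e) / e = (1/(1-e) + 1/e) * a powr (1-e) * b powr e"
  proof -
    have "b * s powr (1-e) = a powr (1-e) * b powr e" "a * s powr (-e) = a powr (1-e) * b powr e"
      using ab False unfolding s_def by (auto simp: powr_divide powr_diff powr_minus field_simps)
    then show ?thesis
      by (simp add: field_simps)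
  qed
  finally show ?thesis .
qed

lemma disjoint_family_dyadic: "disjoint_family (\<lambda>n::nat. {(1/2::real)^n ..< 2 * (1/2)^n})"
proof -
  have "{(1/2::real)^n ..< 2 * (1/2)^n} \<inter> {(1/2)^m ..< 2 * (1/2)^m} = {}" if "n < m" for n m
  proof -
    have "2 * (1/2::real)^m \<le> 2 * (1/2)^Suc n"
      using that by (intro mult_left_mono power_decreasing) auto
    then show ?thesis
      by auto
  qed
  then show ?thesis
    unfolding disjoint_family_on_def by (metis inf_commute nat_neq_iff)
qed

lemma sum_indicator_le_of_disjoint:
  fixes c :: "'i \<Rightarrow> ennreal" and g :: "'a \<Rightarrow> ennreal"
  assumes "finite F" "disjoint_family I" "\<And>i. i \<in> F \<Longrightarrow> t \<in> I i \<Longrightarrow> c i \<le> g t"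
  shows "(\<Sum>i\<in>F. c i * indicator (I i) t) \<le> g t"
proof (cases "\<exists>m\<in>F. t \<in> I m")
  case True
  then obtain m where m: "m \<in> F" "t \<in> I m"
    by blast
  have "t \<notin> I i" if "i \<noteq> m" for i
    using assms(2) m(2) that unfolding disjoint_family_on_def by blast
  then have "(\<Sum>i\<in>F - {m}. c i * indicator (I i) t) = 0"
    by (intro sum.neutral) auto
  then show ?thesis
    using assms(1,3) m by (simp add: sum.remove)
qed (auto intro: sum.neutral)

text \<open>The dyadic sum is the integral of a step function below the integrand on the intervals
  \<open>[2\<^sup>-\<^sup>n, 2\<^sup>1\<^sup>-\<^sup>n)\<close>; monotonicity of \<open>K\<close> replaces any measurability assumption.\<close>
lemma dyadic_sum_le_nn_integral_powr:
  fixes K :: "real \<Rightarrow> real" and e :: real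
  assumes e: "-1 \<le> e"
    and K_mono: "\<And>s t. 0 < s \<Longrightarrow> s \<le> t \<Longrightarrow> K s \<le> K t"
    and K_nonneg: "\<And>t. 0 < t \<Longrightarrow> 0 \<le> K t"
  shows "ennreal (2 powr (-e-1) * (\<Sum>n<N. ((1/2)^n) powr (-e) * K ((1/2)^n)))
     \<le> (\<integral>\<^sup>+ t. indicator {0<..} t * ennreal (t powr (- e) * K t / t) \<partial>lborel)"
proof -
  define d :: "nat \<Rightarrow> real" where "d n = (1/2)^n" for n
  define I where "I n = {d n ..< 2 * d n}" for n
  define c where "c n = (2 * d n) powr (-e-1) * K (d n)" for n
  have d_pos: "0 < d n" for n
    by (simp add: d_def)
  have c_nonneg: "0 \<le> c n" for n
    using K_nonneg[OF d_pos] by (simp add: c_def)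
  have "ennreal (c n) \<le> indicator {0<..} t * ennreal (t powr (- e) * K t / t)" if "t \<in> I n" for n t
  proof -
    have t: "d n \<le> t" "t < 2 * d n" "0 < t"
      using that d_pos[of n] unfolding I_def by auto
    then have "c n \<le> t powr (-e-1) * K t"
      unfolding c_def using e K_mono[OF d_pos t(1)] K_nonneg[OF d_pos, of n]
      by (intro mult_mono powr_mono2') (auto simp: d_pos)
    then show ?thesis
      using t by (simp add: ennreal_leI powr_diff)
  qed
  then have step_le: "(\<Sum>n<N. ennreal (c n) * indicator (I n) t)
      \<le> indicator {0<..} t * ennreal (t powr (- e) * K t / t)" for t
    using disjoint_family_dyadic unfolding I_def d_def by (intro sum_indicator_le_of_disjoint) auto
  have "ennreal (2 powr (-e-1) * (\<Sum>n<N. ((1/2)^n) powr (-e) * K ((1/2)^n)))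
      = (\<Sum>n<N. ennreal (c n) * emeasure lborel (I n))"
  proof -
    have "2 powr (-e-1) * (d n powr (-e) * K (d n)) = c n * d n" for n
      using d_pos[of n] by (simp add: c_def powr_mult powr_diff)
    then show ?thesis
      using c_nonneg d_pos
      by (simp add: sum_distrib_left I_def d_def[symmetric] ennreal_mult'[symmetric])
        (rule sum_ennreal[symmetric], simp add: less_imp_le)
  qed
  also have "\<dots> = (\<integral>\<^sup>+ t. (\<Sum>n<N. ennreal (c n) * indicator (I n) t) \<partial>lborel)"
    by (subst nn_integral_sum) (auto simp: I_def nn_integral_cmult_indicator)
  also have "\<dots> \<le> (\<integral>\<^sup>+ t. indicator {0<..} t * ennreal (t powr (- e) * K t / t) \<partial>lborel)"
    by (intro nn_integral_mono step_le)
  finally show ?thesis .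
qed

locale K_functional =
  fixes XS :: "'a::real_normed_vector set" and qS :: "'a \<Rightarrow> real"
  assumes quasi_normed: "quasi_normed_subspace XS qS"
begin

lemma subspace_XS: "subspace XS"
  using quasi_normed unfolding quasi_normed_subspace_def by (elim conjE) blast

lemma qS_nonneg: "x \<in> XS \<Longrightarrow> 0 \<le> qS x"
  using quasi_normed unfolding quasi_normed_subspace_def by (elim conjE) blast

lemma qS_eq_0_iff: "x \<in> XS \<Longrightarrow> qS x = 0 \<longleftrightarrow> x = 0"
  using quasi_normed unfolding quasi_normed_subspace_def by (elim conjE) blast

lemma qS_0 [simp]: "qS 0 = 0"
  using qS_eq_0_iff subspace_XS subspace_0 by blast

lemma qS_scaleR: "x \<in> XS \<Longrightarrow> qS (c *\<^sub>R x) = \<bar>c\<bar> * qS x"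
  using quasi_normed unfolding quasi_normed_subspace_def by (elim conjE) (erule allE[of _ c], erule bspec)

lemma qS_diff_le:
  obtains C where "1 \<le> C" "\<And>x y. x \<in> XS \<Longrightarrow> y \<in> XS \<Longrightarrow> qS (x - y) \<le> C * (qS x + qS y)"
proof -
  obtain C where C: "1 \<le> C" "\<forall>x\<in>XS. \<forall>y\<in>XS. qS (x + y) \<le> C * (qS x + qS y)"
    using quasi_normed unfolding quasi_normed_subspace_def by (elim conjE exE) auto
  have "qS (x - y) \<le> C * (qS x + qS y)" if "x \<in> XS" "y \<in> XS" for x y
  proof -
    have "qS (x + - y) \<le> C * (qS x + qS (- y))"
      using C(2) that subspace_neg[OF subspace_XS] by blast
    moreover have "qS (- y) = qS y"
      using qS_scaleR[OF that(2), of "-1"] by simp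
    ultimately show ?thesis
      by simp
  qed
  with C(1) show thesis
    by (rule that)
qed

lemma Kfun_le: "z \<in> XS \<Longrightarrow> 0 \<le> t \<Longrightarrow> Kfun XS qS x t \<le> norm (x - z) + t * qS z"
  unfolding Kfun_def
  by (rule cINF_lower) (auto intro!: bdd_belowI2[of _ 0] add_nonneg_nonneg mult_nonneg_nonneg qS_nonneg)

lemma Kfun_greatest:
  "(\<And>z. z \<in> XS \<Longrightarrow> m \<le> norm (x - z) + t * qS z) \<Longrightarrow> m \<le> Kfun XS qS x t"
  unfolding Kfun_def using subspace_XS subspace_0 by (intro cINF_greatest) auto

lemma Kfun_nonneg: "0 \<le> t \<Longrightarrow> 0 \<le> Kfun XS qS x t"
  by (intro Kfun_greatest add_nonneg_nonneg mult_nonneg_nonneg norm_ge_zero qS_nonneg)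

lemma Kfun_mono: "0 \<le> s \<Longrightarrow> s \<le> t \<Longrightarrow> Kfun XS qS x s \<le> Kfun XS qS x t"
  by (rule Kfun_greatest, rule order_trans[OF Kfun_le]) (auto intro!: mult_right_mono qS_nonneg)

lemma Kfun_le_min: "u \<in> XS \<Longrightarrow> 0 \<le> t \<Longrightarrow> Kfun XS qS u t \<le> norm u \<and> Kfun XS qS u t \<le> t * qS u"
  using Kfun_le[where z=0 and x=u] Kfun_le[where z=u and x=u] subspace_XS subspace_0 by auto

lemma exists_near_minimizer:
  assumes "0 \<le> t" "Kfun XS qS x t < m"
  obtains z where "z \<in> XS" "norm (x - z) + t * qS z < m"
  using Kfun_greatest[where x=x and m=m and t=t] assms(2) that by (meson not_le)

lemma near_minimizers:
  assumes t: "\<And>n. 0 \<le> t n" and K: "\<And>n. 0 < Kfun XS qS x (t n)"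
  obtains z where "\<And>n. z n \<in> XS" "\<And>n. norm (x - z n) \<le> 2 * Kfun XS qS x (t n)"
    "\<And>n. t n * qS (z n) \<le> 2 * Kfun XS qS x (t n)"
proof -
  have "\<exists>z. z \<in> XS \<and> norm (x - z) + t n * qS z < 2 * Kfun XS qS x (t n)" for n
    by (rule exists_near_minimizer[of "t n" x "2 * Kfun XS qS x (t n)"]) (use t K[of n] in auto)
  then obtain z where z: "\<And>n. z n \<in> XS" "\<And>n. norm (x - z n) + t n * qS (z n) < 2 * Kfun XS qS x (t n)"
    by metis
  show thesis
  proof (rule that)
    fix n
    show "z n \<in> XS"
      by (rule z(1))
    have "0 \<le> t n * qS (z n)"
      using t qS_nonneg[OF z(1)] by simp
    then show "norm (x - z n) \<le> 2 * Kfun XS qS x (t n)"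
      using z(2)[of n] by linarith
    show "t n * qS (z n) \<le> 2 * Kfun XS qS x (t n)"
      using z(2)[of n] norm_ge_zero[of "x - z n"] by linarith
  qed
qed

lemma norm_le_Kfun:
  assumes C: "0 \<le> C" "\<And>z. z \<in> XS \<Longrightarrow> norm z \<le> C * qS z" and t: "0 < t"
  shows "norm x \<le> max 1 (C / t) * Kfun XS qS x t"
proof -
  define m where "m = max 1 (C / t)"
  have m: "1 \<le> m" "C / t \<le> m"
    by (simp_all add: m_def)
  have "norm x / m \<le> Kfun XS qS x t"
  proof (rule Kfun_greatest)
    fix z assume z: "z \<in> XS"
    have "norm x \<le> norm (x - z) + C / t * (t * qS z)"
      using norm_triangle_sub[of x z] C(2)[OF z] t by (simp add: add.commute)
    also have "\<dots> \<le> m * norm (x - z) + m * (t * qS z)"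
      using m t qS_nonneg[OF z] by (intro add_mono mult_right_mono) (auto simp: mult_le_cancel_right1)
    finally show "norm x / m \<le> norm (x - z) + t * qS z"
      using m by (simp add: pos_divide_le_eq distrib_left mult.commute)
  qed
  then show ?thesis
    using m by (simp add: pos_divide_le_eq mult.commute m_def)
qed

lemma interp_norm_le:
  assumes u: "u \<in> XS" and e: "0 < e" "e < 1"
  shows "u \<in> interp_space XS qS e"
    and "interp_norm XS qS e u \<le> (1/(1-e) + 1/e) * norm u powr (1-e) * qS u powr e"
proof -
  define B where "B = (1/(1-e) + 1/e) * norm u powr (1-e) * qS u powr e"
  have B: "0 \<le> B"
    using e by (simp add: B_def)
  have integral_le: "interp_integral XS qS e u \<le> ennreal B"
    unfolding interp_integral_def B_def
    using Kfun_le_min[OF u] qS_nonneg[OF u] e by (intro nn_integral_powr_le_of_le_min) auto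
  show "u \<in> interp_space XS qS e"
    using le_less_trans[OF integral_le ennreal_less_top] by (simp add: interp_space_def)
  show "interp_norm XS qS e u \<le> B"
    using enn2real_mono[OF integral_le ennreal_less_top] B by (simp add: interp_norm_def)
qed

lemma dyadic_Kfun_sum_le:
  assumes x: "x \<in> interp_space XS qS e" and e: "-1 \<le> e"
  shows "(\<Sum>n<N. ((1/2)^n) powr (-e) * Kfun XS qS x ((1/2)^n)) \<le> 2 powr (e+1) * interp_norm XS qS e x"
proof -
  have "ennreal (2 powr (-e-1) * (\<Sum>n<N. ((1/2)^n) powr (-e) * Kfun XS qS x ((1/2)^n)))
      \<le> interp_integral XS qS e x"
    unfolding interp_integral_def
    using e by (intro dyadic_sum_le_nn_integral_powr Kfun_mono Kfun_nonneg) auto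
  also have "\<dots> = ennreal (interp_norm XS qS e x)"
    using x by (simp add: interp_space_def interp_norm_def less_top[symmetric] ennreal_enn2real)
  finally have "2 powr (-e-1) * (\<Sum>n<N. ((1/2)^n) powr (-e) * Kfun XS qS x ((1/2)^n))
      \<le> interp_norm XS qS e x"
    by (simp add: interp_norm_def)
  then have "2 powr (e+1) * (2 powr (-e-1) * (\<Sum>n<N. ((1/2)^n) powr (-e) * Kfun XS qS x ((1/2)^n)))
      \<le> 2 powr (e+1) * interp_norm XS qS e x"
    by (rule mult_left_mono) simp
  then show ?thesis
    by (simp add: powr_add[symmetric] mult.assoc[symmetric])
qed

lemma dyadic_Kfun_summable:
  assumes x: "x \<in> interp_space XS qS e" and e: "-1 \<le> e"
  shows "summable (\<lambda>n. ((1/2)^n) powr (-e) * Kfun XS qS x ((1/2)^n))"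
    and "(\<Sum>n. ((1/2)^n) powr (-e) * Kfun XS qS x ((1/2)^n)) \<le> 2 powr (e+1) * interp_norm XS qS e x"
proof -
  have nonneg: "0 \<le> ((1/2)^n) powr (-e) * Kfun XS qS x ((1/2)^n)" for n
    by (simp add: Kfun_nonneg)
  show summable: "summable (\<lambda>n. ((1/2)^n) powr (-e) * Kfun XS qS x ((1/2)^n))"
    by (rule summableI_nonneg_bounded[OF nonneg dyadic_Kfun_sum_le[OF x e]])
  show "(\<Sum>n. ((1/2)^n) powr (-e) * Kfun XS qS x ((1/2)^n)) \<le> 2 powr (e+1) * interp_norm XS qS e x"
    by (rule suminf_le_const[OF summable dyadic_Kfun_sum_le[OF x e]])
qed

lemma dyadic_Kfun_tendsto_0:
  assumes x: "x \<in> interp_space XS qS e" and e: "0 \<le> e"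
  shows "(\<lambda>n. Kfun XS qS x ((1/2)^n)) \<longlonglongrightarrow> 0"
proof (rule Lim_null_comparison)
  have "1 \<le> ((1/2::real)^n) powr (-e)" for n
    using powr_le1[of e "(1/2::real)^n"] e by (simp add: powr_minus one_le_inverse power_le_one)
  then have "Kfun XS qS x ((1/2)^n) \<le> ((1/2)^n) powr (-e) * Kfun XS qS x ((1/2)^n)" for n
    using mult_right_mono[of 1 "((1/2::real)^n) powr (-e)" "Kfun XS qS x ((1/2)^n)"] Kfun_nonneg
    by simp
  then show "\<forall>\<^sub>F n in sequentially. norm (Kfun XS qS x ((1/2)^n))
      \<le> ((1/2)^n) powr (-e) * Kfun XS qS x ((1/2)^n)"
    using Kfun_nonneg by (intro always_eventually allI) simp
  show "(\<lambda>n. ((1/2)^n) powr (-e) * Kfun XS qS x ((1/2)^n)) \<longlonglongrightarrow> 0"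
    using dyadic_Kfun_summable(1)[OF x] e by (intro summable_LIMSEQ_zero) simp
qed
end

locale embedded_banach_subspace =
  fixes XL :: "'a::real_normed_vector set" and nL :: "'a \<Rightarrow> real"
  assumes banach: "banach_subspace XL nL"
    and embedded: "cont_embedding XL nL UNIV norm"
begin

lemma subspace_XL: "subspace XL"
  using banach unfolding banach_subspace_def normed_subspace_def by (elim conjE)

lemma nL_nonneg: "x \<in> XL \<Longrightarrow> 0 \<le> nL x"
  using banach unfolding banach_subspace_def normed_subspace_def by (elim conjE) (erule bspec)

lemma nL_0 [simp]: "nL 0 = 0"
  using banach unfolding banach_subspace_def normed_subspace_def
  by (elim conjE) (simp add: subspace_0)

lemma nL_triangle: "x \<in> XL \<Longrightarrow> y \<in> XL \<Longrightarrow> nL (x + y) \<le> nL x + nL y"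
  using banach unfolding banach_subspace_def normed_subspace_def
  by (elim conjE) (drule bspec, assumption, erule bspec)

lemma nL_minus_commute: "x \<in> XL \<Longrightarrow> y \<in> XL \<Longrightarrow> nL (x - y) = nL (y - x)"
proof -
  assume "x \<in> XL" "y \<in> XL"
  then have "y - x \<in> XL"
    using subspace_XL by (simp add: subspace_diff)
  then have "nL ((-1) *\<^sub>R (y - x)) = \<bar>-1\<bar> * nL (y - x)"
    using banach unfolding banach_subspace_def normed_subspace_def
    by (elim conjE) (erule allE[of _ "-1"], erule bspec)
  then show ?thesis
    by simp
qed

lemma nL_sum_le: "(\<And>i. i \<in> I \<Longrightarrow> v i \<in> XL) \<Longrightarrow> nL (sum v I) \<le> (\<Sum>i\<in>I. nL (v i))"
proof (induction I rule: infinite_finite_induct)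
  case (infinite I)
  then show ?case
    by simp
next
  case empty
  then show ?case
    by simp
next
  case (insert i I)
  then have "nL (v i + sum v I) \<le> nL (v i) + nL (sum v I)"
    using subspace_XL by (intro nL_triangle) (auto intro: subspace_sum)
  with insert show ?case
    by simp
qed

lemma norm_le_nL:
  obtains C where "0 \<le> C" "\<And>x. x \<in> XL \<Longrightarrow> norm x \<le> C * nL x"
proof -
  obtain C where C: "\<forall>x\<in>XL. norm x \<le> C * nL x"
    using embedded unfolding cont_embedding_def by blast
  have "norm x \<le> max C 0 * nL x" if "x \<in> XL" for x
    using C that nL_nonneg[OF that] by (metis max.cobounded1 mult_right_mono order_trans)
  then show thesis
    by (intro that[of "max C 0"]) auto
qed

lemma nL_telescope_le:
  assumes z: "\<And>n. z n \<in> XL" and "m \<le> k"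
  shows "nL (z k - z m) \<le> (\<Sum>i\<in>{m..<k}. nL (z (Suc i) - z i))"
  using nL_sum_le[of "{m..<k}" "\<lambda>i. z (Suc i) - z i"] z subspace_XL sum_Suc_diff'[OF \<open>m \<le> k\<close>, of z]
  by (simp add: subspace_diff)

lemma Cauchy_of_summable_increments:
  assumes z: "\<And>n. z n \<in> XL" and summable: "summable (\<lambda>n. nL (z (Suc n) - z n))" and "0 < \<epsilon>"
  shows "\<exists>N. \<forall>m\<ge>N. \<forall>k\<ge>N. nL (z m - z k) < \<epsilon>"
proof -
  obtain N where N: "\<forall>m\<ge>N. \<forall>k. norm (\<Sum>i\<in>{m..<k}. nL (z (Suc i) - z i)) < \<epsilon>"
    using summable \<open>0 < \<epsilon>\<close> unfolding summable_Cauchy by blast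
  have le: "nL (z m - z k) < \<epsilon>" if "N \<le> m" "m \<le> k" for m k
  proof -
    have "nL (z m - z k) = nL (z k - z m)"
      using nL_minus_commute z by blast
    also have "\<dots> \<le> norm (\<Sum>i\<in>{m..<k}. nL (z (Suc i) - z i))"
      using nL_telescope_le[where z=z, OF z \<open>m \<le> k\<close>] by simp
    finally show ?thesis
      using N that(1) order.strict_trans1 by blast
  qed
  have "nL (z m - z k) < \<epsilon>" if "N \<le> m" "N \<le> k" for m k
  proof (cases "m \<le> k")
    case False
    then show ?thesis
      using le[OF \<open>N \<le> k\<close>, of m] nL_minus_commute[OF z z, of m k] by linarith
  qed (rule le[OF \<open>N \<le> m\<close>])
  then show ?thesis
    by blast
qed

lemma tendsto_of_nL_tendsto:
  assumes z: "\<And>n. z n \<in> XL" and y: "y \<in> XL" and lim: "(\<lambda>k. nL (z k - y)) \<longlonglongrightarrow> 0"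
  shows "z \<longlonglongrightarrow> y"
proof -
  obtain C where C: "0 \<le> C" "\<And>x. x \<in> XL \<Longrightarrow> norm x \<le> C * nL x"
    using norm_le_nL by blast
  have "\<forall>\<^sub>F k in sequentially. norm (z k - y) \<le> C * nL (z k - y)"
    using C(2) z y subspace_XL by (intro always_eventually allI) (simp add: subspace_diff)
  then have "(\<lambda>k. z k - y) \<longlonglongrightarrow> 0"
    by (rule Lim_null_comparison[OF _ tendsto_mult_right_zero[OF lim]])
  then show ?thesis
    by (simp add: LIM_zero_iff)
qed

text \<open>Completeness of \<open>X\<^sub>L\<close> yields an \<open>X\<^sub>L\<close>-limit, which the embedding identifies with
  the ambient limit.\<close>
lemma limit_mem_and_nL_le:
  assumes z: "\<And>n. z n \<in> XL" and lim: "z \<longlonglongrightarrow> x"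
    and summable: "summable (\<lambda>n. nL (z (Suc n) - z n))"
  shows "x \<in> XL" and "nL x \<le> nL (z 0) + (\<Sum>n. nL (z (Suc n) - z n))"
proof -
  have "\<exists>N. \<forall>m\<ge>N. \<forall>k\<ge>N. nL (z m - z k) < \<epsilon>" if "0 < \<epsilon>" for \<epsilon>
    by (rule Cauchy_of_summable_increments[where z=z, OF z summable that])
  moreover have "complete_wrt XL nL"
    using banach unfolding banach_subspace_def by (elim conjE)
  ultimately obtain y where y: "y \<in> XL" "(\<lambda>k. nL (z k - y)) \<longlonglongrightarrow> 0"
    using z unfolding complete_wrt_def by blast
  have "x = y"
    using LIMSEQ_unique[OF lim tendsto_of_nL_tendsto[where z=z, OF z y]] .
  then show "x \<in> XL"
    using y(1) by simp
  define B where "B = nL (z 0) + (\<Sum>n. nL (z (Suc n) - z n))"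
  have bound: "nL x \<le> nL (x - z k) + B" for k
  proof -
    have "x - z k \<in> XL" "z k - z 0 \<in> XL" and incr: "\<And>n. z (Suc n) - z n \<in> XL"
      using \<open>x \<in> XL\<close> z subspace_XL by (simp_all add: subspace_diff)
    then have "nL (x - z k + z k) \<le> nL (x - z k) + nL (z k)"
      and "nL (z k - z 0 + z 0) \<le> nL (z k - z 0) + nL (z 0)"
      using z by (simp_all only: nL_triangle)
    moreover have "(\<Sum>i<k. nL (z (Suc i) - z i)) \<le> (\<Sum>n. nL (z (Suc n) - z n))"
      using summable by (rule sum_le_suminf) (simp_all add: nL_nonneg incr)
    moreover have "nL (z k - z 0) \<le> (\<Sum>i<k. nL (z (Suc i) - z i))"
      using nL_telescope_le[where z=z and m=0 and k=k, OF z] by (simp add: atLeast0LessThan)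
    ultimately show ?thesis
      unfolding B_def by simp
  qed
  have "nL (x - z k) = nL (z k - y)" for k
    using nL_minus_commute[OF y(1) z] \<open>x = y\<close> by simp
  then have "(\<lambda>k. nL (x - z k) + B) \<longlonglongrightarrow> 0 + B"
    using y(2) by (intro tendsto_add tendsto_const) simp
  then have "nL x \<le> 0 + B"
    by (rule LIMSEQ_le_const) (use bound in blast)
  then show "nL x \<le> B"
    by simp
qed

end

locale interpolation_setting = K_functional XS qS + embedded_banach_subspace XL nL
  for XS XL :: "'a::real_normed_vector set" and qS nL :: "'a \<Rightarrow> real" +
  fixes A :: "'a \<Rightarrow> 'b::real_normed_vector" and M e :: real
  assumes XS_XL: "cont_embedding XS qS XL nL"
    and A_linear: "linear A"
    and M_pos: "0 < M"
    and A_lower: "\<And>x. norm x \<le> M * norm (A x)"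
    and A_upper: "\<And>x. norm (A x) \<le> M * norm x"
    and e: "0 < e" "e < 1"
begin

lemma XS_subset_XL: "XS \<subseteq> XL"
  using XS_XL unfolding cont_embedding_def by blast

lemma nL_le_qS:
  obtains C where "0 \<le> C" "\<And>x. x \<in> XS \<Longrightarrow> nL x \<le> C * qS x"
proof -
  obtain C where C: "\<forall>x\<in>XS. nL x \<le> C * qS x"
    using XS_XL unfolding cont_embedding_def by blast
  have "nL x \<le> max C 0 * qS x" if "x \<in> XS" for x
    using C that qS_nonneg[OF that] by (metis max.cobounded1 mult_right_mono order_trans)
  then show thesis
    by (intro that[of "max C 0"]) auto
qed

lemma Kfun_pos:
  assumes "x \<noteq> 0" "0 < t"
  shows "0 < Kfun XS qS x t"
proof -
  obtain CS where CS: "0 \<le> CS" "\<And>x. x \<in> XS \<Longrightarrow> nL x \<le> CS * qS x"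
    using nL_le_qS by blast
  obtain CL where CL: "0 \<le> CL" "\<And>x. x \<in> XL \<Longrightarrow> norm x \<le> CL * nL x"
    using norm_le_nL by blast
  have "norm z \<le> CL * CS * qS z" if "z \<in> XS" for z
  proof -
    have "norm z \<le> CL * nL z"
      using CL(2) that XS_subset_XL by blast
    also have "\<dots> \<le> CL * (CS * qS z)"
      by (rule mult_left_mono[OF CS(2)[OF that] CL(1)])
    finally show ?thesis
      by (simp add: mult.assoc)
  qed
  then have "norm x \<le> max 1 (CL * CS / t) * Kfun XS qS x t"
    using CL(1) CS(1) assms(2) by (intro norm_le_Kfun) auto
  then have "0 < max 1 (CL * CS / t) * Kfun XS qS x t"
    using assms(1) by (meson less_le_trans zero_less_norm_iff)
  then show ?thesis
    by (rule zero_less_mult_pos) simp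
qed

lemma interpolation_ineq_of_modulus_le:
  assumes modulus: "\<And>\<delta> \<rho>. 0 < \<delta> \<Longrightarrow> 0 < \<rho> \<Longrightarrow>
      modulus A XL nL \<delta> (Sball XS qS \<rho>) \<le> ereal (c * \<rho> powr e * \<delta> powr (1 - e))"
    and u: "u \<in> XS"
  shows "nL u \<le> c * qS u powr e * norm (A u) powr (1-e)"
proof (cases "u = 0")
  case False
  have \<rho>: "0 < qS u"
    using qS_nonneg[OF u] qS_eq_0_iff[OF u] False by linarith
  have "0 < norm u"
    using False by simp
  then have "A u \<noteq> 0"
    using A_lower[of u] by auto
  then have \<delta>: "0 < norm (A u)"
    by simp
  have "loss XL nL u 0 \<in> {loss XL nL x1 x2 | x1 x2. x1 \<in> Sball XS qS (qS u) \<and> x2 \<in> Sball XS qS (qS u)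
          \<and> norm (A x1 - A x2) \<le> norm (A u)}"
    using u subspace_0[OF subspace_XS] linear_0[OF A_linear] \<rho> unfolding Sball_def by fastforce
  then have "loss XL nL u 0 \<le> modulus A XL nL (norm (A u)) (Sball XS qS (qS u))"
    unfolding modulus_def by (rule Sup_upper)
  also have "\<dots> \<le> ereal (c * qS u powr e * norm (A u) powr (1 - e))"
    using modulus[OF \<delta> \<rho>] .
  finally show ?thesis
    using u XS_subset_XL unfolding loss_def by auto
qed simp

lemma modulus_le_of_interpolation_ineq:
  assumes c: "0 \<le> c" "\<And>u. u \<in> XS \<Longrightarrow> nL u \<le> c * qS u powr e * norm (A u) powr (1-e)"
  shows "\<exists>c'>0. \<forall>\<delta>>0. \<forall>\<rho>>0.
    modulus A XL nL \<delta> (Sball XS qS \<rho>) \<le> ereal (c' * \<rho> powr e * \<delta> powr (1 - e))"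
proof -
  obtain Cq where Cq: "1 \<le> Cq" "\<And>x y. x \<in> XS \<Longrightarrow> y \<in> XS \<Longrightarrow> qS (x - y) \<le> Cq * (qS x + qS y)"
    using qS_diff_le by blast
  define c' where "c' = c * (2 * Cq) powr e + 1"
  have "modulus A XL nL \<delta> (Sball XS qS \<rho>) \<le> ereal (c' * \<rho> powr e * \<delta> powr (1 - e))"
    if "0 < \<delta>" "0 < \<rho>" for \<delta> \<rho>
    unfolding modulus_def
  proof (rule Sup_least, clarify)
    fix x1 x2 assume x: "x1 \<in> Sball XS qS \<rho>" "x2 \<in> Sball XS qS \<rho>" and A: "norm (A x1 - A x2) \<le> \<delta>"
    have u: "x1 - x2 \<in> XS"
      using x subspace_XS by (simp add: Sball_def subspace_diff)
    have "qS (x1 - x2) \<le> Cq * (\<rho> + \<rho>)"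
      using Cq x unfolding Sball_def by (smt (verit, best) mem_Collect_eq mult_left_mono)
    then have "qS (x1 - x2) powr e \<le> (2 * Cq * \<rho>) powr e"
      using qS_nonneg[OF u] e by (intro powr_mono2) auto
    moreover have "norm (A (x1 - x2)) powr (1-e) \<le> \<delta> powr (1-e)"
      using A e by (intro powr_mono2) (auto simp: linear_diff[OF A_linear])
    ultimately have "nL (x1 - x2) \<le> c * (2 * Cq * \<rho>) powr e * \<delta> powr (1-e)"
      using c(2)[OF u] c(1) by (smt (verit) mult_left_mono mult_mono powr_ge_zero zero_le_mult_iff)
    also have "\<dots> \<le> c' * \<rho> powr e * \<delta> powr (1-e)"
      using Cq(1) \<open>0 < \<rho>\<close> by (simp add: c'_def powr_mult mult_right_mono distrib_right)
    finally show "loss XL nL x1 x2 \<le> ereal (c' * \<rho> powr e * \<delta> powr (1-e))"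
      using u XS_subset_XL by (auto simp: loss_def)
  qed
  moreover have "0 < c'"
    using c(1) by (simp add: c'_def add_nonneg_pos)
  ultimately show ?thesis
    by blast
qed

lemma interpolation_ineq_of_embedding:
  assumes "cont_embedding (interp_space XS qS e) (interp_norm XS qS e) XL nL"
  obtains c where "0 \<le> c" "\<And>u. u \<in> XS \<Longrightarrow> nL u \<le> c * qS u powr e * norm (A u) powr (1-e)"
proof -
  obtain C where C: "\<forall>x\<in>interp_space XS qS e. nL x \<le> C * interp_norm XS qS e x"
    using assms unfolding cont_embedding_def by blast
  define c where "c = max C 0 * (1/(1-e) + 1/e) * M powr (1-e)"
  have "nL u \<le> c * qS u powr e * norm (A u) powr (1-e)" if u: "u \<in> XS" for u
  proof -
    have "nL u \<le> max C 0 * interp_norm XS qS e u"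
      using C interp_norm_le(1)[OF u e]
      by (smt (verit) interp_norm_def enn2real_nonneg max.cobounded1 mult_right_mono)
    also have "\<dots> \<le> max C 0 * ((1/(1-e) + 1/e) * norm u powr (1-e) * qS u powr e)"
      by (intro mult_left_mono interp_norm_le(2)[OF u e]) simp
    also have "\<dots> \<le> max C 0 * ((1/(1-e) + 1/e) * (M * norm (A u)) powr (1-e) * qS u powr e)"
      using A_lower[of u] e by (intro mult_left_mono mult_right_mono powr_mono2) auto
    also have "\<dots> = c * qS u powr e * norm (A u) powr (1-e)"
      using M_pos by (simp add: c_def powr_mult)
    finally show ?thesis .
  qed
  moreover have "0 \<le> c"
    using e unfolding c_def by (intro mult_nonneg_nonneg add_nonneg_nonneg) auto
  ultimately show thesis
    using that by blast
qed

text \<open>The difference has \<open>qS \<lesssim> K/t\<close> and \<open>\<parallel>A \<cdot>\<parallel> \<lesssim> K\<close>; the interpolation inequality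
  turns these into \<open>nL \<lesssim> t\<^sup>-\<^sup>e K\<close>.\<close>
lemma nL_diff_near_minimizers_le:
  assumes c: "0 \<le> c" "\<And>u. u \<in> XS \<Longrightarrow> nL u \<le> c * qS u powr e * norm (A u) powr (1-e)"
    and Cq: "0 < Cq" "\<And>x y. x \<in> XS \<Longrightarrow> y \<in> XS \<Longrightarrow> qS (x - y) \<le> Cq * (qS x + qS y)"
    and t: "0 < t" and K: "0 \<le> K"
    and z: "z \<in> XS" "norm (x - z) \<le> 2 * K" "t * qS z \<le> 2 * K"
    and z': "z' \<in> XS" "norm (x - z') \<le> 2 * K" "t / 2 * qS z' \<le> 2 * K"
  shows "nL (z' - z) \<le> c * (6 * Cq) powr e * (4 * M) powr (1-e) * (t powr (-e) * K)"
proof -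
  have u: "z' - z \<in> XS"
    using z z' subspace_XS by (simp add: subspace_diff)
  have "qS (z' - z) \<le> Cq * (qS z' + qS z)"
    using Cq(2) z z' by blast
  also have "\<dots> \<le> Cq * (6 * K / t)"
    using z(3) z'(3) t Cq(1) by (intro mult_left_mono) (auto simp: field_simps)
  finally have qS_le: "qS (z' - z) \<le> 6 * Cq * K / t"
    by (simp add: ac_simps)
  have "norm (A (z' - z)) \<le> M * norm (z' - z)"
    by (rule A_upper)
  also have "\<dots> \<le> M * (4 * K)"
    using norm_triangle_ineq4[of "x - z" "x - z'"] z(2) z'(2) M_pos
    by (intro mult_left_mono) (auto simp: algebra_simps)
  finally have A_le: "norm (A (z' - z)) \<le> 4 * M * K"
    by simp
  have "nL (z' - z) \<le> c * qS (z' - z) powr e * norm (A (z' - z)) powr (1-e)"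
    by (rule c(2)[OF u])
  also have "\<dots> \<le> c * (6 * Cq * K / t) powr e * (4 * M * K) powr (1-e)"
    using c(1) qS_le A_le qS_nonneg[OF u] e
    by (intro mult_mono mult_left_mono powr_mono2) auto
  also have "\<dots> = c * (6 * Cq) powr e * (4 * M) powr (1-e) * (t powr (-e) * (K powr e * K powr (1-e)))"
    using Cq(1) t K M_pos by (simp add: powr_mult powr_divide powr_minus divide_inverse inverse_powr)
  also have "K powr e * K powr (1-e) = K"
    using K by (simp add: powr_add[symmetric])
  finally show ?thesis .
qed

lemma dyadic_near_minimizers:
  assumes c: "0 \<le> c" "\<And>u. u \<in> XS \<Longrightarrow> nL u \<le> c * qS u powr e * norm (A u) powr (1-e)"
    and Cq: "0 < Cq" "\<And>x y. x \<in> XS \<Longrightarrow> y \<in> XS \<Longrightarrow> qS (x - y) \<le> Cq * (qS x + qS y)"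
    and x: "x \<in> interp_space XS qS e" "x \<noteq> 0"
  obtains z where "\<And>n. z n \<in> XS" "z \<longlonglongrightarrow> x" "qS (z 0) \<le> 2 * Kfun XS qS x 1"
    "\<And>n. nL (z (Suc n) - z n) \<le> c * (6 * Cq) powr e * (4 * M) powr (1-e) *
       (((1/2)^n) powr (-e) * Kfun XS qS x ((1/2)^n))"
proof -
  define t :: "nat \<Rightarrow> real" where "t n = (1/2)^n" for n
  define K where "K n = Kfun XS qS x (t n)" for n
  have t_pos: "0 < t n" for n
    by (simp add: t_def)
  have K_pos: "0 < K n" for n
    unfolding K_def using Kfun_pos[OF x(2) t_pos] .
  have K_Suc: "K (Suc n) \<le> K n" for n
    unfolding K_def t_def by (intro Kfun_mono) auto
  obtain z where z: "\<And>n. z n \<in> XS" "\<And>n. norm (x - z n) \<le> 2 * K n" "\<And>n. t n * qS (z n) \<le> 2 * K n"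
    using near_minimizers[of t x] t_pos K_pos unfolding K_def by (metis less_imp_le)
  show thesis
  proof (rule that)
    show "z n \<in> XS" for n
      by (rule z(1))
    have "\<forall>\<^sub>F n in sequentially. norm (z n - x) \<le> 2 * K n"
      using z(2) by (intro always_eventually allI) (simp add: norm_minus_commute)
    moreover have "(\<lambda>n. 2 * K n) \<longlonglongrightarrow> 0"
      unfolding K_def t_def using e by (intro tendsto_mult_right_zero dyadic_Kfun_tendsto_0[OF x(1)]) simp
    ultimately have "(\<lambda>n. z n - x) \<longlonglongrightarrow> 0"
      by (rule Lim_null_comparison)
    then show "z \<longlonglongrightarrow> x"
      by (simp add: LIM_zero_iff)
    show "qS (z 0) \<le> 2 * Kfun XS qS x 1"
      using z(3)[of 0] by (simp add: K_def t_def)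
    fix n
    have "norm (x - z (Suc n)) \<le> 2 * K n" "t n / 2 * qS (z (Suc n)) \<le> 2 * K n"
      using z(2,3)[of "Suc n"] K_Suc[of n] by (simp_all add: t_def)
    then show "nL (z (Suc n) - z n) \<le> c * (6 * Cq) powr e * (4 * M) powr (1-e) *
       (((1/2)^n) powr (-e) * Kfun XS qS x ((1/2)^n))"
      using nL_diff_near_minimizers_le[OF c Cq t_pos _ z(1,2,3)[of n] z(1)[of "Suc n"]] K_pos[of n]
      by (simp add: K_def t_def)
  qed
qed

lemma nL_le_interp_norm:
  assumes c: "0 \<le> c" "\<And>u. u \<in> XS \<Longrightarrow> nL u \<le> c * qS u powr e * norm (A u) powr (1-e)"
    and Cq: "0 < Cq" "\<And>x y. x \<in> XS \<Longrightarrow> y \<in> XS \<Longrightarrow> qS (x - y) \<le> Cq * (qS x + qS y)"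
    and CS: "0 \<le> CS" "\<And>u. u \<in> XS \<Longrightarrow> nL u \<le> CS * qS u"
    and x: "x \<in> interp_space XS qS e" "x \<noteq> 0"
  shows "x \<in> XL"
    and "nL x \<le> 2 powr (e+1) * (2 * CS + c * (6 * Cq) powr e * (4 * M) powr (1-e)) * interp_norm XS qS e x"
proof -
  define S where "S n = ((1/2::real)^n) powr (-e) * Kfun XS qS x ((1/2)^n)" for n
  define D where "D = c * (6 * Cq) powr e * (4 * M) powr (1-e)"
  define J where "J = interp_norm XS qS e x"
  have S_summable: "summable S" and S_suminf: "(\<Sum>n. S n) \<le> 2 powr (e+1) * J"
    using dyadic_Kfun_summable[OF x(1)] e unfolding S_def J_def by simp_all
  obtain z where z: "\<And>n. z n \<in> XS" "z \<longlonglongrightarrow> x" "qS (z 0) \<le> 2 * S 0"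
    and incr_le: "\<And>n. nL (z (Suc n) - z n) \<le> D * S n"
    by (rule dyadic_near_minimizers[OF c Cq x]) (auto simp: S_def D_def)
  have incr_summable: "summable (\<lambda>n. nL (z (Suc n) - z n))"
  proof (rule summable_comparison_test'[OF summable_mult[OF S_summable, of D]])
    fix n
    have "z (Suc n) - z n \<in> XL"
      using z(1) XS_subset_XL subspace_XL by (simp add: subsetD subspace_diff)
    then show "norm (nL (z (Suc n) - z n)) \<le> D * S n"
      using incr_le[of n] nL_nonneg by simp
  qed
  have zL: "\<And>n. z n \<in> XL"
    using z(1) XS_subset_XL by blast
  note limit = limit_mem_and_nL_le[where z=z, OF zL z(2) incr_summable]
  show "x \<in> XL"
    by (rule limit(1))
  have "0 \<le> S n" for n
    by (simp add: S_def Kfun_nonneg)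
  then have "S 0 \<le> (\<Sum>n. S n)"
    using sum_le_suminf[OF S_summable, of "{0}"] by simp
  have "nL (z 0) \<le> CS * qS (z 0)"
    by (rule CS(2)[OF z(1)])
  also have "\<dots> \<le> CS * (2 * (2 powr (e+1) * J))"
    using z(3) \<open>S 0 \<le> (\<Sum>n. S n)\<close> S_suminf CS(1) by (intro mult_left_mono) auto
  finally have "nL (z 0) \<le> 2 * CS * (2 powr (e+1) * J)"
    by simp
  moreover have "(\<Sum>n. nL (z (Suc n) - z n)) \<le> D * (2 powr (e+1) * J)"
  proof -
    have "(\<Sum>n. nL (z (Suc n) - z n)) \<le> (\<Sum>n. D * S n)"
      by (rule suminf_le[OF incr_le incr_summable summable_mult[OF S_summable]])
    also have "\<dots> = D * (\<Sum>n. S n)"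
      by (rule suminf_mult[OF S_summable])
    also have "\<dots> \<le> D * (2 powr (e+1) * J)"
      using c(1) by (intro mult_left_mono[OF S_suminf]) (simp add: D_def)
    finally show ?thesis .
  qed
  ultimately show "nL x \<le> 2 powr (e+1) * (2 * CS + c * (6 * Cq) powr e * (4 * M) powr (1-e)) * interp_norm XS qS e x"
    using limit(2) unfolding D_def[symmetric] J_def[symmetric] by (simp add: algebra_simps)
qed

lemma embedding_of_interpolation_ineq:
  assumes c: "0 \<le> c" "\<And>u. u \<in> XS \<Longrightarrow> nL u \<le> c * qS u powr e * norm (A u) powr (1-e)"
  shows "cont_embedding (interp_space XS qS e) (interp_norm XS qS e) XL nL"
proof -
  obtain Cq where Cq: "1 \<le> Cq" "\<And>x y. x \<in> XS \<Longrightarrow> y \<in> XS \<Longrightarrow> qS (x - y) \<le> Cq * (qS x + qS y)"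
    using qS_diff_le by blast
  obtain CS where CS: "0 \<le> CS" "\<And>u. u \<in> XS \<Longrightarrow> nL u \<le> CS * qS u"
    using nL_le_qS by blast
  define C where "C = 2 powr (e+1) * (2 * CS + c * (6 * Cq) powr e * (4 * M) powr (1-e))"
  have "x \<in> XL \<and> nL x \<le> C * interp_norm XS qS e x" if x: "x \<in> interp_space XS qS e" for x
  proof (cases "x = 0")
    case True
    have "0 \<le> C"
      using CS(1) c(1) M_pos by (simp add: C_def)
    then show ?thesis
      using True subspace_0[OF subspace_XL] by (simp add: interp_norm_def)
  next
    case False
    show ?thesis
      using nL_le_interp_norm[OF c _ Cq(2) CS x False] Cq(1) unfolding C_def by simp
  qed
  then show ?thesis
    unfolding cont_embedding_def by blast
qed

end

theorem proposition4p12: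
  fixes A :: "'a::banach \<Rightarrow> 'b::{real_inner, complete_space}"
    and X XS XL :: "'a set"
    and nX qS nL :: "'a \<Rightarrow> real"
    and M e :: real
  assumes X_banach: "banach_subspace X nX"
    and X_emb: "cont_embedding X nX UNIV norm"
    and X_dense: "closure X = UNIV"
    and A_lin: "bounded_linear A"
    and M_ge: "M \<ge> 1"
    and A_bounds: "\<forall>x. norm x / M \<le> norm (A x) \<and> norm (A x) \<le> M * norm x"
    and XS_qb: "quasi_banach_subspace XS qS"
    and XS_sub: "XS \<subseteq> X"
    and XL_banach: "banach_subspace XL nL"
    and XS_XL: "cont_embedding XS qS XL nL"
    and XL_XA: "cont_embedding XL nL UNIV norm"
    and e: "0 < e" "e < 1"
  shows "cont_embedding (interp_space XS qS e) (interp_norm XS qS e) XL nL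
     \<longleftrightarrow> (\<exists>c>0. \<forall>\<delta>>0. \<forall>\<rho>>0.
            modulus A XL nL \<delta> (Sball XS qS \<rho>) \<le> ereal (c * \<rho> powr e * \<delta> powr (1 - e)))"
proof -
  have "quasi_normed_subspace XS qS"
    using XS_qb by (simp add: quasi_banach_subspace_def)
  moreover have "\<And>x. norm x \<le> M * norm (A x)"
    using A_bounds M_ge by (simp add: divide_le_eq mult.commute)
  ultimately interpret interpolation_setting XS XL qS nL A M e
    using XL_banach XL_XA XS_XL bounded_linear.linear[OF A_lin] M_ge A_bounds e
    by (intro interpolation_setting.intro K_functional.intro embedded_banach_subspace.intro
        interpolation_setting_axioms.intro) auto
  show ?thesis
  proof
    assume "cont_embedding (interp_space XS qS e) (interp_norm XS qS e) XL nL"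
    then obtain c where "0 \<le> c" "\<And>u. u \<in> XS \<Longrightarrow> nL u \<le> c * qS u powr e * norm (A u) powr (1-e)"
      by (rule interpolation_ineq_of_embedding) blast
    then show "\<exists>c>0. \<forall>\<delta>>0. \<forall>\<rho>>0.
        modulus A XL nL \<delta> (Sball XS qS \<rho>) \<le> ereal (c * \<rho> powr e * \<delta> powr (1 - e))"
      by (rule modulus_le_of_interpolation_ineq)
  next
    assume "\<exists>c>0. \<forall>\<delta>>0. \<forall>\<rho>>0.
        modulus A XL nL \<delta> (Sball XS qS \<rho>) \<le> ereal (c * \<rho> powr e * \<delta> powr (1 - e))"
    then obtain c where c: "0 < c" and modulus: "\<And>\<delta> \<rho>. 0 < \<delta> \<Longrightarrow> 0 < \<rho> \<Longrightarrow>
        modulus A XL nL \<delta> (Sball XS qS \<rho>) \<le> ereal (c * \<rho> powr e * \<delta> powr (1 - e))"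
      by blast
    show "cont_embedding (interp_space XS qS e) (interp_norm XS qS e) XL nL"
      using interpolation_ineq_of_modulus_le[where c=c, OF modulus]
      by (rule embedding_of_interpolation_ineq[OF less_imp_le[OF c]])
  qed
qed

end
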